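(* For all level expressions $l_1, l_2, l$ and every natural number $n > 0$: $l_1 \sqcup l \simeq l_2 \sqcup \mathtt{s}^n\,l$ if and only if $l_1 \simeq l_2 \sqcup \mathtt{s}^n\,l$.
   Context: Level expressions are generated by the grammar $l ::= i \mid \mathtt{z} \mid \mathtt{s}\,l \mid l \sqcup l'$, where $i$ ranges over an infinite set $\mathcal{I}$ of level variables. The relation $\simeq$ is the smallest congruence on level expressions (closed under the constructors and under substitution of level expressions for level variables) containing the equations $i_1 \sqcup (i_2 \sqcup i_3) \approx (i_1 \sqcup i_2) \sqcup i_3$, $i_1 \sqcup i_2 \approx i_2 \sqcup i_1$, $\mathtt{s}\,(i_1 \sqcup i_2) \approx \mathtt{s}\,i_1 \sqcup \mathtt{s}\,i_2$, $i \sqcup \mathtt{s}\,i \approx \mathtt{s}\,i$, $i \sqcup \mathtt{z} \approx i$, $i \sqcup i \approx i$. $\mathtt{s}^0\,l = l$, $\mathtt{s}^{n+1}\,l = \mathtt{s}(\mathtt{s}^n\,l)$. *)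

theory Defs
  imports Main
begin

datatype 'v lvl = LVar 'v | LZ | LS "'v lvl" | LMax "'v lvl" "'v lvl"

primrec lsubst :: "('v \<Rightarrow> 'v lvl) \<Rightarrow> 'v lvl \<Rightarrow> 'v lvl" where
  "lsubst \<sigma> (LVar i) = \<sigma> i"
| "lsubst \<sigma> LZ = LZ"
| "lsubst \<sigma> (LS l) = LS (lsubst \<sigma> l)"
| "lsubst \<sigma> (LMax l l') = LMax (lsubst \<sigma> l) (lsubst \<sigma> l')"

primrec spow :: "nat \<Rightarrow> 'v lvl \<Rightarrow> 'v lvl" where
  "spow 0 l = l"
| "spow (Suc n) l = LS (spow n l)"

inductive leq :: "'v lvl \<Rightarrow> 'v lvl \<Rightarrow> bool" where
  assoc: "leq (LMax (LVar i1) (LMax (LVar i2) (LVar i3))) (LMax (LMax (LVar i1) (LVar i2)) (LVar i3))"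
| comm: "leq (LMax (LVar i1) (LVar i2)) (LMax (LVar i2) (LVar i1))"
| sdist: "leq (LS (LMax (LVar i1) (LVar i2))) (LMax (LS (LVar i1)) (LS (LVar i2)))"
| sabs: "leq (LMax (LVar i) (LS (LVar i))) (LS (LVar i))"
| zero: "leq (LMax (LVar i) LZ) (LVar i)"
| idem: "leq (LMax (LVar i) (LVar i)) (LVar i)"
| refl: "leq l l"
| sym: "leq l l' \<Longrightarrow> leq l' l"
| trans: "leq l1 l2 \<Longrightarrow> leq l2 l3 \<Longrightarrow> leq l1 l3"
| cong_S: "leq l l' \<Longrightarrow> leq (LS l) (LS l')"
| cong_Max: "leq l1 l1' \<Longrightarrow> leq l2 l2' \<Longrightarrow> leq (LMax l1 l2) (LMax l1' l2')"
| subst: "leq l l' \<Longrightarrow> leq (lsubst \<sigma> l) (lsubst \<sigma> l')"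

end

theory Submission
  imports Defs
begin

text \<open>Interpret levels in \<open>\<nat>\<close>, with \<open>\<squnion>\<close> as \<open>max\<close> and \<open>s\<close> as successor. The
  equational theory is sound for this semantics, and complete: every level is provably equal to
  a join of atoms \<open>s\<^sup>k z\<close> and \<open>s\<^sup>k i\<close>, and semantic domination of such joins is derivable
  atom by atom. So \<open>\<simeq>\<close> is semantic equality, and the theorem reduces to the arithmetic fact
  that for \<open>n > 0\<close> the value of \<open>l\<close> is strictly below that of \<open>s\<^sup>n l\<close> and hence absorbed.
  Infinitely many variables are needed so that the equations, which are stated on variables,
  can be instantiated at arbitrary levels.\<close>

primrec lvl_eval :: "('v \<Rightarrow> nat) \<Rightarrow> 'v lvl \<Rightarrow> nat" where
  "lvl_eval \<rho> (LVar v) = \<rho> v"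
| "lvl_eval \<rho> LZ = 0"
| "lvl_eval \<rho> (LS l) = Suc (lvl_eval \<rho> l)"
| "lvl_eval \<rho> (LMax a b) = max (lvl_eval \<rho> a) (lvl_eval \<rho> b)"

lemma lvl_eval_lsubst: "lvl_eval \<rho> (lsubst \<sigma> l) = lvl_eval (\<lambda>i. lvl_eval \<rho> (\<sigma> i)) l"
  by (induction l) auto

lemma lvl_eval_spow [simp]: "lvl_eval \<rho> (spow n l) = n + lvl_eval \<rho> l"
  by (induction n) auto

lemma leq_sound: "leq a b \<Longrightarrow> lvl_eval \<rho> a = lvl_eval \<rho> b"
proof (induction arbitrary: \<rho> rule: leq.induct)
  case (subst l l' \<sigma>)
  then show ?case by (simp add: lvl_eval_lsubst)
qed auto

fun atom :: "nat \<times> 'v option \<Rightarrow> 'v lvl" where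
  "atom (k, None) = spow k LZ"
| "atom (k, Some v) = spow k (LVar v)"

fun join :: "(nat \<times> 'v option) list \<Rightarrow> 'v lvl" where
  "join [] = LZ"
| "join [x] = atom x"
| "join (x # y # zs) = LMax (atom x) (join (y # zs))"

fun norm :: "'v lvl \<Rightarrow> (nat \<times> 'v option) list" where
  "norm (LVar v) = [(0, Some v)]"
| "norm LZ = [(0, None)]"
| "norm (LS a) = map (apfst Suc) (norm a)"
| "norm (LMax a b) = norm a @ norm b"

fun atom_le :: "nat \<times> 'v option \<Rightarrow> nat \<times> 'v option \<Rightarrow> bool" where
  "atom_le (k, u) (j, w) \<longleftrightarrow> k \<le> j \<and> (u = None \<or> u = w)"

lemma atom_apfst_Suc: "atom (apfst Suc x) = LS (atom x)"
  by (cases x rule: atom.cases) auto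

lemma lvl_eval_atom: "lvl_eval \<rho> (atom (k, u)) = k + (case u of None \<Rightarrow> 0 | Some v \<Rightarrow> \<rho> v)"
  by (cases u) auto

lemma join_Cons: "xs \<noteq> [] \<Longrightarrow> join (x # xs) = LMax (atom x) (join xs)"
  by (cases xs) auto

lemma norm_not_Nil: "norm a \<noteq> []"
  by (induction a) auto

lemma lvl_eval_atom_le_join: "x \<in> set xs \<Longrightarrow> lvl_eval \<rho> (atom x) \<le> lvl_eval \<rho> (join xs)"
  by (induction xs rule: join.induct) auto

lemma lvl_eval_join_attained:
  "xs \<noteq> [] \<Longrightarrow> \<exists>y\<in>set xs. lvl_eval \<rho> (join xs) = lvl_eval \<rho> (atom y)"
  by (induction xs rule: join.induct) (auto simp: max_def)

lemma atom_le_of_lvl_eval: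
  assumes "ys \<noteq> []" and "\<And>\<rho>. lvl_eval \<rho> (atom x) \<le> lvl_eval \<rho> (join ys)"
  shows "\<exists>y\<in>set ys. atom_le x y"
proof -
  obtain k u where x: "x = (k, u)" by fastforce
  define N where "N = k + sum_list (map fst ys) + 1"
  \<comment> \<open>Give the variable of \<open>x\<close> (if any) a value larger than every offset occurring in \<open>ys\<close>.\<close>
  define \<rho> where "\<rho> w = (if u = Some w then N else 0)" for w
  obtain j w where y: "(j, w) \<in> set ys" "lvl_eval \<rho> (join ys) = lvl_eval \<rho> (atom (j, w))"
    using lvl_eval_join_attained[OF assms(1)] by fastforce
  have "j \<le> sum_list (map fst ys)"
    using member_le_sum_list[of j "map fst ys"] y(1) by force
  moreover have "lvl_eval \<rho> (atom x) \<le> lvl_eval \<rho> (atom (j, w))"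
    using assms(2)[of \<rho>] y(2) by simp
  ultimately have "atom_le x (j, w)"
    unfolding x lvl_eval_atom \<rho>_def N_def by (auto split: option.splits if_splits)
  with y(1) show ?thesis by blast
qed

lemma obtain_assignment3:
  fixes a b c :: "'v lvl"
  assumes "infinite (UNIV :: 'v set)"
  obtains \<sigma> :: "'v \<Rightarrow> 'v lvl" and i1 i2 i3 where "\<sigma> i1 = a" "\<sigma> i2 = b" "\<sigma> i3 = c"
proof -
  obtain i1 :: 'v where True by simp
  obtain i2 where "i2 \<noteq> i1" using ex_new_if_finite[OF assms, of "{i1}"] by auto
  moreover obtain i3 where "i3 \<notin> {i1, i2}" using ex_new_if_finite[OF assms, of "{i1, i2}"] by auto
  ultimately show ?thesis
    by (intro that[of "\<lambda>i. if i = i1 then a else if i = i2 then b else c" i1 i2 i3]) auto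
qed

definition lle :: "'v lvl \<Rightarrow> 'v lvl \<Rightarrow> bool" where
  "lle a b \<longleftrightarrow> leq (LMax a b) b"

context
  assumes inf: "infinite (UNIV :: 'v set)"
begin

lemma leq_LMax_assoc: "leq (LMax (a :: 'v lvl) (LMax b c)) (LMax (LMax a b) c)"
proof -
  obtain \<sigma> :: "'v \<Rightarrow> 'v lvl" and i1 i2 i3 where "\<sigma> i1 = a" "\<sigma> i2 = b" "\<sigma> i3 = c"
    using obtain_assignment3[OF inf, of a b c] .
  with leq.subst[OF leq.assoc[of i1 i2 i3], of \<sigma>] show ?thesis by simp
qed

lemma leq_LMax_comm: "leq (LMax (a :: 'v lvl) b) (LMax b a)"
proof -
  obtain \<sigma> :: "'v \<Rightarrow> 'v lvl" and i1 i2 i3 where "\<sigma> i1 = a" "\<sigma> i2 = b" "\<sigma> i3 = a"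
    using obtain_assignment3[OF inf, of a b a] .
  with leq.subst[OF leq.comm[of i1 i2], of \<sigma>] show ?thesis by simp
qed

lemma leq_LS_LMax: "leq (LS (LMax (a :: 'v lvl) b)) (LMax (LS a) (LS b))"
proof -
  obtain \<sigma> :: "'v \<Rightarrow> 'v lvl" and i1 i2 i3 where "\<sigma> i1 = a" "\<sigma> i2 = b" "\<sigma> i3 = a"
    using obtain_assignment3[OF inf, of a b a] .
  with leq.subst[OF leq.sdist[of i1 i2], of \<sigma>] show ?thesis by simp
qed

lemma leq_LMax_LS_self: "leq (LMax (a :: 'v lvl) (LS a)) (LS a)"
  using leq.subst[OF leq.sabs, of "\<lambda>_. a"] by simp

lemma leq_LMax_LZ: "leq (LMax (a :: 'v lvl) LZ) a"
  using leq.subst[OF leq.zero, of "\<lambda>_. a"] by simp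

lemma leq_LMax_idem: "leq (LMax (a :: 'v lvl) a) a"
  using leq.subst[OF leq.idem, of "\<lambda>_. a"] by simp

lemma lle_refl: "lle (a :: 'v lvl) a"
  unfolding lle_def by (rule leq_LMax_idem)

lemma lle_trans: "lle (a :: 'v lvl) b \<Longrightarrow> lle b c \<Longrightarrow> lle a c"
  unfolding lle_def by (meson leq_LMax_assoc leq.cong_Max leq.refl leq.sym leq.trans)

lemma lle_LMaxI: "lle (a :: 'v lvl) c \<Longrightarrow> lle b c \<Longrightarrow> lle (LMax a b) c"
  unfolding lle_def by (meson leq_LMax_assoc leq.cong_Max leq.refl leq.sym leq.trans)

lemma lle_LMax1: "lle (a :: 'v lvl) (LMax a b)"
  unfolding lle_def
  by (meson leq_LMax_assoc leq_LMax_idem leq.cong_Max leq.refl leq.sym leq.trans)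

lemma lle_LMax2: "lle (b :: 'v lvl) (LMax a b)"
  using lle_LMax1[of b a] unfolding lle_def
  by (meson leq_LMax_comm leq.cong_Max leq.refl leq.trans)

lemma LZ_lle: "lle LZ (a :: 'v lvl)"
  unfolding lle_def by (meson leq_LMax_comm leq_LMax_LZ leq.trans)

lemma lle_spow: "lle (a :: 'v lvl) b \<Longrightarrow> lle (spow k a) (spow k b)"
proof (induction k)
  case (Suc k)
  then show ?case
    unfolding lle_def by (simp, meson leq_LS_LMax leq.cong_S leq.sym leq.trans)
qed simp

lemma lle_spow_mono: "j \<le> k \<Longrightarrow> lle (spow j (a :: 'v lvl)) (spow k a)"
proof (induction k rule: dec_induct)
  case (step k)
  then show ?case
    using lle_trans leq_LMax_LS_self unfolding lle_def by (metis spow.simps(2))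
qed (rule lle_refl)

lemma lle_antisym: "lle (a :: 'v lvl) b \<Longrightarrow> lle b a \<Longrightarrow> leq a b"
  unfolding lle_def by (meson leq_LMax_comm leq.sym leq.trans)

lemma lle_leq_cong: "leq a a' \<Longrightarrow> leq b b' \<Longrightarrow> lle (a :: 'v lvl) b \<Longrightarrow> lle a' b'"
  unfolding lle_def by (meson leq.cong_Max leq.sym leq.trans)

lemma leq_join_append:
  "xs \<noteq> [] \<Longrightarrow> ys \<noteq> [] \<Longrightarrow> leq (join (xs @ ys)) (LMax (join xs) (join (ys :: (nat \<times> 'v option) list)))"
proof (induction xs rule: join.induct)
  case (3 x y zs)
  then have "leq (join (x # y # zs @ ys)) (LMax (atom x) (LMax (join (y # zs)) (join ys)))"
    by (simp add: join_Cons leq.cong_Max leq.refl)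
  from leq.trans[OF this leq_LMax_assoc] show ?case by simp
qed (simp_all add: join_Cons leq.refl)

lemma leq_LS_join:
  "xs \<noteq> [] \<Longrightarrow> leq (LS (join xs)) (join (map (apfst Suc) (xs :: (nat \<times> 'v option) list)))"
proof (induction xs rule: join.induct)
  case (3 x y zs)
  then show ?case
    using leq_LS_LMax[of "atom x" "join (y # zs)"]
    by (simp add: atom_apfst_Suc) (meson leq.cong_Max leq.refl leq.trans)
qed (simp_all add: atom_apfst_Suc leq.refl)

lemma leq_join_norm: "leq (a :: 'v lvl) (join (norm a))"
proof (induction a)
  case (LS a)
  then show ?case by simp (meson leq_LS_join norm_not_Nil leq.cong_S leq.trans)
next
  case (LMax a b)
  then show ?case by simp (meson leq_join_append norm_not_Nil leq.cong_Max leq.sym leq.trans)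
qed (simp_all add: leq.refl)

lemma lle_atom: "atom_le x y \<Longrightarrow> lle (atom x) (atom (y :: nat \<times> 'v option))"
  by (cases x rule: atom.cases; cases y rule: atom.cases)
    (auto intro: lle_spow_mono lle_trans lle_spow LZ_lle)

lemma lle_join_member: "y \<in> set ys \<Longrightarrow> lle (atom y) (join (ys :: (nat \<times> 'v option) list))"
  by (induction ys rule: join.induct)
    (auto intro: lle_refl lle_LMax1 lle_trans[OF _ lle_LMax2])

lemma join_lle: "(\<And>x. x \<in> set xs \<Longrightarrow> lle (atom x) b) \<Longrightarrow> lle (join (xs :: (nat \<times> 'v option) list)) b"
  by (induction xs rule: join.induct) (auto intro: lle_LMaxI LZ_lle)

lemma lle_complete:
  assumes "\<And>\<rho>. lvl_eval \<rho> a \<le> lvl_eval \<rho> b"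
  shows "lle (a :: 'v lvl) b"
proof -
  have "lle (join (norm a)) (join (norm b))"
  proof (rule join_lle)
    fix x assume x: "x \<in> set (norm a)"
    have "lvl_eval \<rho> (atom x) \<le> lvl_eval \<rho> (join (norm b))" for \<rho>
      using lvl_eval_atom_le_join[OF x, of \<rho>] assms[of \<rho>]
        leq_sound[OF leq_join_norm[of a]] leq_sound[OF leq_join_norm[of b]] by simp
    then obtain y where "y \<in> set (norm b)" "atom_le x y"
      using atom_le_of_lvl_eval norm_not_Nil by blast
    then show "lle (atom x) (join (norm b))"
      using lle_atom lle_join_member lle_trans by blast
  qed
  then show ?thesis
    using lle_leq_cong leq_join_norm leq.sym by blast
qed

lemma leq_iff_lvl_eval: "leq (a :: 'v lvl) b \<longleftrightarrow> (\<forall>\<rho>. lvl_eval \<rho> a = lvl_eval \<rho> b)"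
  using leq_sound lle_antisym lle_complete by (metis order_refl)

end

theorem mainTheorem7:
  fixes l1 l2 l :: "'v lvl" and n :: nat
  assumes "infinite (UNIV :: 'v set)" and "n > 0"
  shows "leq (LMax l1 l) (LMax l2 (spow n l)) \<longleftrightarrow> leq l1 (LMax l2 (spow n l))"
proof -
  have "max a x = max b (n + x) \<longleftrightarrow> a = max b (n + x)" for a b x :: nat
    using \<open>n > 0\<close> by (auto simp: max_def)
  then show ?thesis
    by (simp add: leq_iff_lvl_eval[OF assms(1)])
qed

end
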